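(* Let $G$ be a flattened grammar and $\mathrm{CPS}(G)$ its CPS transformation (with respect to an arbitrary fixed choice of CPS-triggering nonterminals), and let $H$ be the grammar whose productions are those of $G$ together with those of $\mathrm{CPS}(G)$. Then for every $\lambda\in\Sigma^*$: (1) For every symbol $X$ of $G$, if $\hat X\Rightarrow^*\lambda$ in $\mathrm{CPS}(G)$ in $n$ steps, then $X\,\tau_X\Rightarrow^*\lambda$ in $H$ in $n$ steps. (2) For every dotted production $\Pi=X\to\alpha_1\cdots\alpha_{i-1}\cdot\alpha_i\cdots\alpha_r$ of $G$, if $\tau_\Pi\Rightarrow^*\lambda$ in $\mathrm{CPS}(G)$ in $n$ steps, then $\alpha_i\cdots\alpha_r\,\tau_X\Rightarrow^*\lambda$ in $H$ in $n$ steps.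
   Context: BNF grammars and flattening. A BNF grammar over terminals $\Sigma$ is a list of rules $X\to e$, where $X$ is a nonterminal (called top-level) and $e$ is an expression: a single symbol; a concatenation $e_1\cdots e_n$ ($n\ge 0$, the case $n=0$ being $\varepsilon$); an alternation $e_1\mid\cdots\mid e_n$; an optional $e_1?$; or a repetition $e_1^*$. The procedure $\mathrm{Flatten}(X,e)$ emits context-free productions: (i) if $e=\alpha$ is a single symbol, emit $X\to\alpha$; (ii) if $e=e_1\cdots e_n$, for each $i$ let $\alpha_i=e_i$ if $e_i$ is a single symbol, and otherwise let $\alpha_i$ be a fresh nonterminal and call $\mathrm{Flatten}(\alpha_i,e_i)$; emit $X\to\alpha_1\cdots\alpha_n$; (iii) if $e=e_1\mid\cdots\mid e_n$, call $\mathrm{Flatten}(X,e_i)$ for each $i$; (iv) if $e=e_1?$, call $\mathrm{Flatten}(X,e_1\mid\varepsilon)$; (v) if $e=e_1^*$, let $\alpha$ be fresh, call $\mathrm{Flatten}(\alpha,e_1)$ and emit $X\to\alpha X$ and $X\to\varepsilon$. The flattened grammar $G$ consists of all productions emitted by $\mathrm{Flatten}(X,e)$ over all rules $X\to e$; its start symbol $S$ is a top-level nonterminal. CPS transformation. A nonterminal is CPS-eligible if it was created as a fresh symbol during flattening. Fix an arbitrary subset of the CPS-eligible nonterminals, called CPS-triggering (terminals and top-level nonterminals are never CPS-triggering). For every nonterminal $Y$ let $\hat Y$ be a new symbol; for a terminal $\sigma$ set $\hat\sigma=\sigma$. Define mutually recursive procedures. $\mathrm{CPSProd}(X\to\alpha_1\cdots\alpha_i\cdot\alpha_{i+1}\cdots\alpha_r,\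 \tau)$, where $\tau$ is a string of symbols: if $i=0$, add the production $\hat X\to\tau$ to $\mathrm{CPS}(G)$; if $i>0$ and $\alpha_i$ is not CPS-triggering, call $\mathrm{CPSProd}(X\to\alpha_1\cdots\alpha_{i-1}\cdot\alpha_i\cdots\alpha_r,\ \hat\alpha_i\tau)$; if $i>0$, $\alpha_i$ is CPS-triggering, $i=r$ and $X=\alpha_r$ (i.e. the dotted production has the form $\alpha\to\gamma\alpha\,\cdot$), call $\mathrm{CPSProd}(X\to\alpha_1\cdots\alpha_{r-1}\cdot\alpha_r,\ \hat\alpha_r)$; otherwise ($\alpha_i$ CPS-triggering, not of that form) call $\mathrm{CPSSym}(\alpha_i,\tau)$ and then $\mathrm{CPSProd}(X\to\alpha_1\cdots\alpha_{i-1}\cdot\alpha_i\cdots\alpha_r,\ \hat\alpha_i)$. $\mathrm{CPSSym}(X,\tau)$: for each production $X\to\eta$ of $G$, call $\mathrm{CPSProd}(X\to\eta\,\cdot,\ \tau)$. The grammar $\mathrm{CPS}(G)$ consists of all productions added when $\mathrm{CPSSym}(X,\varepsilon)$ is called for every non-CPS-triggering nonterminal $X$; its start symbol is $\hat S$. Tail contexts. During this transformation $\mathrm{CPSSym}(X,\cdot)$ is invoked exactly once for each nonterminal $X$, and $\mathrm{CPSProd}(\Pi,\cdot)$ exactly once for each dotted production $\Pi$ of $G$. For a nonterminal $X$, $\tau_X$ denotes the second argument of that invocation of $\mathrm{CPSSym}(X,\cdot)$; for a terminal $X$, $\tau_X=\varepsilon$. For a dotted production $\Pi$, $\tau_\Pi$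 is the second argument of the invocation $\mathrm{CPSProd}(\Pi,\cdot)$. "$A\Rightarrow^* w$ in $n$ steps" means there is a derivation from $A$ to $w$ using exactly $n$ production applications. *)

theory Defs
  imports Main
begin

text \<open>Nonterminals are either top-level (names from the BNF grammar) or fresh
  (created during flattening, numbered by a counter).\<close>
datatype 'n nt = Top 'n | Fresh nat

text \<open>Symbols of the combined grammar H: terminals, nonterminals Y of G, and hatted
  nonterminals Y-hat.  For a terminal, its hat is the terminal itself.\<close>
datatype ('t,'n) sym = Tm 't | Nt "'n nt" | Hat "'n nt"

fun hat :: "('t,'n) sym \<Rightarrow> ('t,'n) sym" where
  "hat (Tm a) = Tm a"
| "hat (Nt Y) = Hat Y"
| "hat (Hat Y) = Hat Y"

datatype ('t,'n) bexp =
    BTm 't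
  | BNt 'n
  | Conc "('t,'n) bexp list"
  | Alt "('t,'n) bexp list"
  | Opt "('t,'n) bexp"
  | Star "('t,'n) bexp"

type_synonym ('t,'n) prod = "'n nt \<times> ('t,'n) sym list"

fun single_sym :: "('t,'n) bexp \<Rightarrow> ('t,'n) sym option" where
  "single_sym (BTm a) = Some (Tm a)"
| "single_sym (BNt A) = Some (Nt (Top A))"
| "single_sym _ = None"

text \<open>Flatten, threading a counter k that supplies fresh nonterminals Fresh k.
  The optional case e? is Flatten(X, e | epsilon), i.e. Flatten(X,e) followed by
  emitting X -> epsilon.\<close>
fun flat :: "'n nt \<Rightarrow> ('t,'n) bexp \<Rightarrow> nat \<Rightarrow> ('t,'n) prod list \<times> nat"
and flat_conc :: "('t,'n) bexp list \<Rightarrow> nat \<Rightarrow> ('t,'n) sym list \<times> ('t,'n) prod list \<times> nat"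
and flat_alt :: "'n nt \<Rightarrow> ('t,'n) bexp list \<Rightarrow> nat \<Rightarrow> ('t,'n) prod list \<times> nat"
where
  "flat X (BTm a) k = ([(X, [Tm a])], k)"
| "flat X (BNt A) k = ([(X, [Nt (Top A)])], k)"
| "flat X (Conc es) k = (case flat_conc es k of (as, ps, k') \<Rightarrow> (ps @ [(X, as)], k'))"
| "flat X (Alt es) k = flat_alt X es k"
| "flat X (Opt e) k = (case flat X e k of (ps, k') \<Rightarrow> (ps @ [(X, [])], k'))"
| "flat X (Star e) k =
     (case flat (Fresh k) e (Suc k) of (ps, k') \<Rightarrow>
        (ps @ [(X, [Nt (Fresh k), Nt X]), (X, [])], k'))"
| "flat_conc [] k = ([], [], k)"
| "flat_conc (e # es) k =
     (case single_sym e of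
        Some s \<Rightarrow> (case flat_conc es k of (as, ps, k') \<Rightarrow> (s # as, ps, k'))
      | None \<Rightarrow> (case flat (Fresh k) e (Suc k) of (ps1, k1) \<Rightarrow>
                 (case flat_conc es k1 of (as, ps2, k2) \<Rightarrow> (Nt (Fresh k) # as, ps1 @ ps2, k2))))"
| "flat_alt X [] k = ([], k)"
| "flat_alt X (e # es) k =
     (case flat X e k of (ps1, k1) \<Rightarrow> (case flat_alt X es k1 of (ps2, k2) \<Rightarrow> (ps1 @ ps2, k2)))"

fun flat_rules :: "('n \<times> ('t,'n) bexp) list \<Rightarrow> nat \<Rightarrow> ('t,'n) prod list \<times> nat" where
  "flat_rules [] k = ([], k)"
| "flat_rules ((A, e) # rs) k =
     (case flat (Top A) e k of (ps1, k1) \<Rightarrow> (case flat_rules rs k1 of (ps2, k2) \<Rightarrow> (ps1 @ ps2, k2)))"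

definition flat_grammar :: "('n \<times> ('t,'n) bexp) list \<Rightarrow> ('t,'n) prod set" where
  "flat_grammar rs = set (fst (flat_rules rs 0))"

definition syms :: "('t,'n) prod set \<Rightarrow> ('t,'n) sym set" where
  "syms G = {Nt X | X \<beta>. (X, \<beta>) \<in> G} \<union> {s | X \<beta> s. (X, \<beta>) \<in> G \<and> s \<in> set \<beta>}"

definition cps_eligible :: "('t,'n) prod set \<Rightarrow> 'n nt set" where
  "cps_eligible G = {Fresh k | k. Nt (Fresh k) \<in> syms G}"

definition is_trig :: "'n nt set \<Rightarrow> ('t,'n) sym \<Rightarrow> bool" where
  "is_trig trig s = (\<exists>Y. s = Nt Y \<and> Y \<in> trig)"

fun nt_of :: "('t,'n) sym \<Rightarrow> 'n nt" where
  "nt_of (Nt Y) = Y"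
| "nt_of (Hat Y) = Y"
| "nt_of (Tm a) = undefined"

text \<open>A dotted production (X, eta, i) is X -> eta with the dot after the first i
  symbols of eta.  The predicates cps_sym X tau / cps_prod Pi tau hold iff the
  transformation invokes CPSSym(X, tau) / CPSProd(Pi, tau), respectively.\<close>
inductive cps_sym :: "('t,'n) prod set \<Rightarrow> 'n nt set \<Rightarrow> 'n nt \<Rightarrow> ('t,'n) sym list \<Rightarrow> bool"
  and cps_prod :: "('t,'n) prod set \<Rightarrow> 'n nt set \<Rightarrow> 'n nt \<times> ('t,'n) sym list \<times> nat
                     \<Rightarrow> ('t,'n) sym list \<Rightarrow> bool"
  for G :: "('t,'n) prod set" and trig :: "'n nt set"
where
  root: "Nt X \<in> syms G \<Longrightarrow> X \<notin> trig \<Longrightarrow> cps_sym G trig X []"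
| sym_call: "cps_sym G trig X \<tau> \<Longrightarrow> (X, \<eta>) \<in> G \<Longrightarrow> cps_prod G trig (X, \<eta>, length \<eta>) \<tau>"
| nontrig: "cps_prod G trig (X, \<eta>, i) \<tau> \<Longrightarrow> 0 < i \<Longrightarrow> \<not> is_trig trig (\<eta> ! (i - 1))
            \<Longrightarrow> cps_prod G trig (X, \<eta>, i - 1) (hat (\<eta> ! (i - 1)) # \<tau>)"
| self: "cps_prod G trig (X, \<eta>, i) \<tau> \<Longrightarrow> 0 < i \<Longrightarrow> is_trig trig (\<eta> ! (i - 1))
            \<Longrightarrow> i = length \<eta> \<Longrightarrow> \<eta> ! (i - 1) = Nt X
            \<Longrightarrow> cps_prod G trig (X, \<eta>, i - 1) [Hat X]"
| trig_sym: "cps_prod G trig (X, \<eta>, i) \<tau> \<Longrightarrow> 0 < i \<Longrightarrow> is_trig trig (\<eta> ! (i - 1))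
            \<Longrightarrow> \<not> (i = length \<eta> \<and> \<eta> ! (i - 1) = Nt X)
            \<Longrightarrow> cps_sym G trig (nt_of (\<eta> ! (i - 1))) \<tau>"
| trig_prod: "cps_prod G trig (X, \<eta>, i) \<tau> \<Longrightarrow> 0 < i \<Longrightarrow> is_trig trig (\<eta> ! (i - 1))
            \<Longrightarrow> \<not> (i = length \<eta> \<and> \<eta> ! (i - 1) = Nt X)
            \<Longrightarrow> cps_prod G trig (X, \<eta>, i - 1) [hat (\<eta> ! (i - 1))]"

text \<open>CPS(G): productions X-hat -> tau added when CPSProd is called with i = 0.\<close>
definition CPS :: "('t,'n) prod set \<Rightarrow> 'n nt set \<Rightarrow> (('t,'n) sym \<times> ('t,'n) sym list) set" where
  "CPS G trig = {(Hat X, \<tau>) | X \<eta> \<tau>. cps_prod G trig (X, \<eta>, 0) \<tau>}"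

definition lift :: "('t,'n) prod set \<Rightarrow> (('t,'n) sym \<times> ('t,'n) sym list) set" where
  "lift G = {(Nt X, \<beta>) | X \<beta>. (X, \<beta>) \<in> G}"

definition Hgram :: "('t,'n) prod set \<Rightarrow> 'n nt set \<Rightarrow> (('t,'n) sym \<times> ('t,'n) sym list) set" where
  "Hgram G trig = lift G \<union> CPS G trig"

text \<open>Tail contexts (the argument of the unique invocation).\<close>
definition tau_sym :: "('t,'n) prod set \<Rightarrow> 'n nt set \<Rightarrow> ('t,'n) sym \<Rightarrow> ('t,'n) sym list" where
  "tau_sym G trig s = (case s of Nt X \<Rightarrow> (THE \<tau>. cps_sym G trig X \<tau>) | _ \<Rightarrow> [])"

definition tau_prod :: "('t,'n) prod set \<Rightarrow> 'n nt set \<Rightarrow> 'n nt \<times> ('t,'n) sym list \<times> nat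
                          \<Rightarrow> ('t,'n) sym list" where
  "tau_prod G trig \<Pi> = (THE \<tau>. cps_prod G trig \<Pi> \<tau>)"

definition derive1 :: "(('t,'n) sym \<times> ('t,'n) sym list) set
                       \<Rightarrow> ('t,'n) sym list \<Rightarrow> ('t,'n) sym list \<Rightarrow> bool" where
  "derive1 P u v = (\<exists>a A \<beta> b. u = a @ [A] @ b \<and> (A, \<beta>) \<in> P \<and> v = a @ \<beta> @ b)"

abbreviation derives_n :: "(('t,'n) sym \<times> ('t,'n) sym list) set \<Rightarrow> nat
                           \<Rightarrow> ('t,'n) sym list \<Rightarrow> ('t,'n) sym list \<Rightarrow> bool" where
  "derives_n P n u v \<equiv> (derive1 P ^^ n) u v"

end

(*
  Both claims are proved together by induction on the length of the CPS(G)-derivation.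
  The tail context of a dotted production is built from right to left: a non-triggering
  symbol s is put in front of the tail as hat s, while a triggering symbol s replaces the
  tail by [hat s] and hands the old tail over as the tail context of s itself.  Reading a
  CPS(G)-derivation of hat X backwards therefore unfolds X tau_X into the right-hand side of a
  production followed by tau_X, each hat s being replaced by s tau_s.  For a triggering s the
  remaining part of the derivation starts from tau_s, a string of terminals and hatted
  symbols, which can only be rewritten by CPS(G)-productions; this is what keeps the
  induction inside CPS(G).

  The tail contexts are well defined because flattening places every fresh nonterminal at
  exactly one position that is not a final self-recursive one, and this position lies in a
  production of a nonterminal created earlier.
*)

theory Submission
  imports Defs
begin

section \<open>Derivations\<close>

lemma derives_n_mono: "P \<subseteq> Q \<Longrightarrow> derives_n P n u v \<Longrightarrow> derives_n Q n u v"
  by (rule relpowp_mono[of "derive1 P" "derive1 Q"]) (auto simp: derive1_def, blast)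

lemma derive1_append:
  "derive1 P u v \<Longrightarrow> derive1 P (x @ u @ y) (x @ v @ y)"
  unfolding derive1_def by (metis append.assoc)

lemma derives_n_append_context:
  "derives_n P n u v \<Longrightarrow> derives_n P n (x @ u @ y) (x @ v @ y)"
  by (induction n arbitrary: v) (auto intro: derive1_append)

lemma derives_n_append:
  "derives_n P n1 u1 v1 \<Longrightarrow> derives_n P n2 u2 v2 \<Longrightarrow> derives_n P (n1 + n2) (u1 @ u2) (v1 @ v2)"
proof -
  assume "derives_n P n1 u1 v1" "derives_n P n2 u2 v2"
  then have "derives_n P n1 (u1 @ u2) (v1 @ u2)" "derives_n P n2 (v1 @ u2) (v1 @ v2)"
    using derives_n_append_context[where x="[]"] derives_n_append_context[where y="[]"] by auto
  then show ?thesis unfolding relpowp_add by blast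
qed

lemma derive1_append_cases:
  assumes "derive1 P (u1 @ u2) v"
  shows "(\<exists>v1. derive1 P u1 v1 \<and> v = v1 @ u2) \<or> (\<exists>v2. derive1 P u2 v2 \<and> v = u1 @ v2)"
proof -
  from assms obtain a A \<beta> b where split: "u1 @ u2 = a @ [A] @ b" and prod: "(A, \<beta>) \<in> P"
    and v: "v = a @ \<beta> @ b" unfolding derive1_def by blast
  from split consider us where "u1 = a @ [A] @ us" "b = us @ u2"
    | us where "a = u1 @ us" "u2 = us @ [A] @ b"
    by (auto simp: append_eq_append_conv2 Cons_eq_append_conv append_eq_Cons_conv)
  then show ?thesis
    by cases (use prod v in \<open>fastforce simp: derive1_def\<close>)+
qed

lemma derives_n_append_split:
  "derives_n P n (u1 @ u2) v \<Longrightarrow>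
   \<exists>n1 n2 v1 v2. n = n1 + n2 \<and> v = v1 @ v2 \<and> derives_n P n1 u1 v1 \<and> derives_n P n2 u2 v2"
proof (induction n arbitrary: u1 u2)
  case (Suc n)
  from relpowp_Suc_D2[OF Suc.prems] obtain x
    where step: "derive1 P (u1 @ u2) x" and rest: "derives_n P n x v" by blast
  from derive1_append_cases[OF step] show ?case
  proof (elim disjE exE conjE)
    fix x1 assume "derive1 P u1 x1" "x = x1 @ u2"
    with Suc.IH[of x1 u2] rest show ?case by (metis add_Suc relpowp_Suc_I2)
  next
    fix x2 assume "derive1 P u2 x2" "x = u1 @ x2"
    with Suc.IH[of u1 x2] rest show ?case by (metis add_Suc_right relpowp_Suc_I2)
  qed
qed auto

lemma derives_n_append_split_terminals:
  "derives_n P n (u1 @ u2) (map Tm w) \<Longrightarrow>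
   \<exists>n1 n2 w1 w2. n = n1 + n2 \<and> w = w1 @ w2
     \<and> derives_n P n1 u1 (map Tm w1) \<and> derives_n P n2 u2 (map Tm w2)"
  by (drule derives_n_append_split) (auto simp: map_eq_append_conv)

lemma derive1_Cons: "(A, \<beta>) \<in> P \<Longrightarrow> derive1 P (A # u) (\<beta> @ u)"
  unfolding derive1_def by (metis append_Cons append_Nil)

lemma derive1_singleton: "derive1 P [A] v \<Longrightarrow> (A, v) \<in> P"
  unfolding derive1_def by (auto simp: Cons_eq_append_conv append_eq_Cons_conv)

section \<open>Invocations of the CPS transformation\<close>

lemma lhs_in_syms: "(X, \<eta>) \<in> G \<Longrightarrow> Nt X \<in> syms G"
  by (auto simp: syms_def)

lemma rhs_in_syms: "(X, \<eta>) \<in> G \<Longrightarrow> s \<in> set \<eta> \<Longrightarrow> s \<in> syms G"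
  by (auto simp: syms_def)

text \<open>The positions from which the transformation invokes CPSSym(Y, -): occurrences of Y on
  a right-hand side, except a final self-recursive occurrence (Y -> gamma Y), for which CPSProd
  continues with [Hat Y] without invoking CPSSym.\<close>
definition occurrences :: "('t,'n) prod set \<Rightarrow> 'n nt \<Rightarrow> ('n nt \<times> ('t,'n) sym list \<times> nat) set" where
  "occurrences P Y = {(X, \<eta>, i). (X, \<eta>) \<in> P \<and> i < length \<eta> \<and> \<eta> ! i = Nt Y
                                    \<and> \<not> (Suc i = length \<eta> \<and> X = Y)}"

text \<open>The tail context handed from the dotted production with the dot after position i to the
  one with the dot before it; the self-recursive case also yields [hat s].\<close>
definition cps_cont :: "'n nt set \<Rightarrow> ('t,'n) sym \<Rightarrow> ('t,'n) sym list \<Rightarrow> ('t,'n) sym list" where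
  "cps_cont trig s \<tau> = (if is_trig trig s then [hat s] else hat s # \<tau>)"

definition hat_string :: "('t,'n) sym list \<Rightarrow> bool" where
  "hat_string u \<longleftrightarrow> set u \<subseteq> range Tm \<union> range Hat"

lemma hat_string_simps [simp]:
  "hat_string []" "hat_string (hat s # u) = hat_string u" "hat_string (Hat Y # u) = hat_string u"
  by (cases s; auto simp: hat_string_def)+

lemma hat_string_cps:
  "cps_sym G trig X \<tau> \<Longrightarrow> hat_string \<tau>"
  "cps_prod G trig \<Pi> \<tau> \<Longrightarrow> hat_string \<tau>"
  by (induction rule: cps_sym_cps_prod.inducts) auto

lemma cps_prod_in_G:
  assumes "cps_prod G trig (X, \<eta>, i) \<tau>"
  shows "(X, \<eta>) \<in> G" and "i \<le> length \<eta>"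
proof -
  have "(fst \<Pi>, fst (snd \<Pi>)) \<in> G \<and> snd (snd \<Pi>) \<le> length (fst (snd \<Pi>))"
    if "cps_prod G trig \<Pi> \<sigma>" for \<Pi> \<sigma>
    using that by (induct rule: cps_sym_cps_prod.inducts(2)) auto
  with assms show "(X, \<eta>) \<in> G" "i \<le> length \<eta>" by fastforce+
qed

lemma cps_prod_step:
  assumes "cps_prod G trig (X, \<eta>, Suc i) \<tau>"
  shows "cps_prod G trig (X, \<eta>, i) (cps_cont trig (\<eta> ! i) \<tau>)"
proof (cases "is_trig trig (\<eta> ! i)")
  case False
  then show ?thesis using cps_sym_cps_prod.nontrig[OF assms] by (simp add: cps_cont_def)
next
  case True
  have "cps_prod G trig (X, \<eta>, i) [hat (\<eta> ! i)]"
  proof (cases "Suc i = length \<eta> \<and> \<eta> ! i = Nt X")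
    case self: True
    have "is_trig trig (\<eta> ! (Suc i - 1))" "\<eta> ! (Suc i - 1) = Nt X"
      using True conjunct2[OF self] by simp_all
    from cps_sym_cps_prod.self[OF assms zero_less_Suc this(1) conjunct1[OF self] this(2)]
    show ?thesis using conjunct2[OF self] by simp
  next
    case False
    show ?thesis using cps_sym_cps_prod.trig_prod[OF assms] True False by simp
  qed
  then show ?thesis using True by (simp add: cps_cont_def)
qed

lemma cps_prod_stepE:
  assumes "cps_prod G trig (X, \<eta>, i) \<tau>" and "i < length \<eta>"
  obtains \<tau>' where "cps_prod G trig (X, \<eta>, Suc i) \<tau>'" and "\<tau> = cps_cont trig (\<eta> ! i) \<tau>'"
  using assms by (cases rule: cps_prod.cases) (auto simp: cps_cont_def)

lemma cps_prod_length_imp_sym: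
  assumes "cps_prod G trig (X, \<eta>, length \<eta>) \<tau>"
  shows "cps_sym G trig X \<tau>"
proof -
  have impossible: False if "cps_prod G trig (X, \<eta>, i) \<sigma>" "0 < i" "length \<eta> = i - 1" for i \<sigma>
    using cps_prod_in_G(2)[OF that(1)] that(2,3) by simp
  from assms show ?thesis by (cases rule: cps_prod.cases) (use impossible in blast)+
qed

lemma cps_prod_descend:
  assumes "cps_prod G trig (X, \<eta>, j) \<tau>" and "i \<le> j"
  shows "\<exists>\<tau>'. cps_prod G trig (X, \<eta>, i) \<tau>'"
  using assms(2) by (induction rule: inc_induct) (use assms(1) cps_prod_step in blast)+

lemma cps_sym_nontrig: "cps_sym G trig Y \<tau> \<Longrightarrow> Y \<notin> trig \<Longrightarrow> \<tau> = []"
  by (cases rule: cps_sym.cases) (auto simp: is_trig_def)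

lemma cps_sym_trigE:
  assumes "cps_sym G trig Y \<tau>" and "Y \<in> trig"
  obtains X \<eta> i where "(X, \<eta>, i) \<in> occurrences G Y" and "cps_prod G trig (X, \<eta>, Suc i) \<tau>"
  using assms
proof (cases rule: cps_sym.cases)
  case (trig_sym X \<eta> i)
  then have "(X, \<eta>, i - 1) \<in> occurrences G Y"
    using cps_prod_in_G[OF trig_sym(2)] by (auto simp: occurrences_def is_trig_def)
  with trig_sym show ?thesis using that by simp
qed auto

lemma CPS_subset_Hgram: "CPS G trig \<subseteq> Hgram G trig"
  by (auto simp: Hgram_def)

lemma derives_Hgram_imp_CPS:
  "hat_string u \<Longrightarrow> derives_n (Hgram G trig) n u v \<Longrightarrow> derives_n (CPS G trig) n u v"
proof (induction n arbitrary: u)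
  case (Suc n)
  from relpowp_Suc_D2[OF Suc.prems(2)] obtain x where step: "derive1 (Hgram G trig) u x"
    and rest: "derives_n (Hgram G trig) n x v" by blast
  from step obtain a A \<beta> b where u: "u = a @ [A] @ b" and prod: "(A, \<beta>) \<in> Hgram G trig"
    and x: "x = a @ \<beta> @ b" unfolding derive1_def by blast
  from Suc.prems(1) u have "A \<in> range Tm \<union> range Hat" by (auto simp: hat_string_def)
  with prod have "(A, \<beta>) \<in> CPS G trig" by (auto simp: Hgram_def lift_def)
  moreover from this have "hat_string x"
    using Suc.prems(1) u x by (auto simp: CPS_def hat_string_def dest!: hat_string_cps(2))
  ultimately show ?case
    using Suc.IH[OF _ rest] u x unfolding derive1_def by (blast intro: relpowp_Suc_I2)
qed simp

section \<open>Soundness of the CPS transformation\<close>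

text \<open>Creation order: top-level nonterminals exist before flattening, Fresh k is the k-th one
  created.\<close>
fun nt_rank :: "'n nt \<Rightarrow> nat" where
  "nt_rank (Top A) = 0"
| "nt_rank (Fresh k) = Suc k"

text \<open>Uniqueness of the occurrence makes the tail contexts functional; the rank condition
  makes every CPSSym invocation happen, by well-founded induction.\<close>
locale cps_occurrences =
  fixes G :: "('t,'n) prod set" and trig :: "'n nt set"
  assumes trig_occurrence_unique:
      "Y \<in> trig \<Longrightarrow> p \<in> occurrences G Y \<Longrightarrow> q \<in> occurrences G Y \<Longrightarrow> p = q"
    and trig_occurrence_earlier:
      "Y \<in> trig \<Longrightarrow> \<exists>p \<in> occurrences G Y. nt_rank (fst p) < nt_rank Y"
begin

lemma cps_prod_pred_unique:
  assumes "cps_prod G trig (X, \<eta>, i) \<tau>" and "0 < i"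
    and unique: "\<And>\<sigma>. cps_prod G trig (X, \<eta>, i) \<sigma> \<Longrightarrow> \<sigma> = \<tau>"
    and "cps_prod G trig (X, \<eta>, i - 1) \<tau>'"
  shows "\<tau>' = cps_cont trig (\<eta> ! (i - 1)) \<tau>"
proof -
  have "i - 1 < length \<eta>" using cps_prod_in_G(2)[OF assms(1)] \<open>0 < i\<close> by simp
  with assms(4) obtain \<sigma> where "cps_prod G trig (X, \<eta>, Suc (i - 1)) \<sigma>"
    and "\<tau>' = cps_cont trig (\<eta> ! (i - 1)) \<sigma>" by (rule cps_prod_stepE)
  with unique \<open>0 < i\<close> show ?thesis by simp
qed

lemma cps_functional:
  "cps_sym G trig Y \<tau> \<Longrightarrow> cps_sym G trig Y \<tau>' \<Longrightarrow> \<tau>' = \<tau>"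
  "cps_prod G trig \<Pi> \<tau> \<Longrightarrow> cps_prod G trig \<Pi> \<tau>' \<Longrightarrow> \<tau>' = \<tau>"
proof (induction arbitrary: \<tau>' and \<tau>' rule: cps_sym_cps_prod.inducts)
  case (root X)
  then show ?case using cps_sym_nontrig by blast
next
  case (sym_call X \<tau> \<eta>)
  then show ?case using cps_prod_length_imp_sym by blast
next
  case (nontrig X \<eta> i \<tau>)
  from cps_prod_pred_unique[OF \<open>cps_prod G trig (X, \<eta>, i) \<tau>\<close> \<open>0 < i\<close> nontrig.IH(2)
      \<open>cps_prod G trig (X, \<eta>, i - 1) \<tau>'\<close>]
  show ?case using \<open>\<not> is_trig trig (\<eta> ! (i - 1))\<close> by (simp add: cps_cont_def)
next
  case (self X \<eta> i \<tau>)
  from cps_prod_pred_unique[OF \<open>cps_prod G trig (X, \<eta>, i) \<tau>\<close> \<open>0 < i\<close> self.IH(2)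
      \<open>cps_prod G trig (X, \<eta>, i - 1) \<tau>'\<close>]
  show ?case
    using \<open>is_trig trig (\<eta> ! (i - 1))\<close> \<open>\<eta> ! (i - 1) = Nt X\<close> by (simp add: cps_cont_def)
next
  case (trig_prod X \<eta> i \<tau>)
  from cps_prod_pred_unique[OF \<open>cps_prod G trig (X, \<eta>, i) \<tau>\<close> \<open>0 < i\<close> trig_prod.IH(2)
      \<open>cps_prod G trig (X, \<eta>, i - 1) \<tau>'\<close>]
  show ?case using \<open>is_trig trig (\<eta> ! (i - 1))\<close> by (simp add: cps_cont_def)
next
  case (trig_sym X \<eta> i \<tau>)
  from \<open>is_trig trig (\<eta> ! (i - 1))\<close> obtain Y where Y: "\<eta> ! (i - 1) = Nt Y" "Y \<in> trig"
    by (auto simp: is_trig_def)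
  have occ: "(X, \<eta>, i - 1) \<in> occurrences G Y"
    using cps_prod_in_G[OF \<open>cps_prod G trig (X, \<eta>, i) \<tau>\<close>] \<open>0 < i\<close> Y(1)
      \<open>\<not> (i = length \<eta> \<and> \<eta> ! (i - 1) = Nt X)\<close>
    by (auto simp: occurrences_def)
  from \<open>cps_sym G trig (nt_of (\<eta> ! (i - 1))) \<tau>'\<close> Y obtain X' \<eta>' i'
    where "(X', \<eta>', i') \<in> occurrences G Y" and "cps_prod G trig (X', \<eta>', Suc i') \<tau>'"
    by (auto elim: cps_sym_trigE)
  with trig_occurrence_unique[OF Y(2) occ] have "cps_prod G trig (X, \<eta>, Suc (i - 1)) \<tau>'"
    by blast
  with \<open>0 < i\<close> have "cps_prod G trig (X, \<eta>, i) \<tau>'" by simp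
  then show ?case by (rule trig_sym.IH(2))
qed

lemma cps_sym_exists: "Nt Y \<in> syms G \<Longrightarrow> \<exists>\<tau>. cps_sym G trig Y \<tau>"
proof (induction Y rule: measure_induct_rule[where f = nt_rank])
  case (less Y)
  show ?case
  proof (cases "Y \<in> trig")
    case False
    with less.prems show ?thesis by (blast intro: cps_sym_cps_prod.root)
  next
    case True
    then obtain X \<eta> i where occ: "(X, \<eta>, i) \<in> occurrences G Y" and "nt_rank X < nt_rank Y"
      using trig_occurrence_earlier by fastforce
    from occ have G: "(X, \<eta>) \<in> G" "Suc i \<le> length \<eta>" "\<eta> ! i = Nt Y"
      and not_self: "\<not> (Suc i = length \<eta> \<and> \<eta> ! i = Nt X)"
      by (auto simp: occurrences_def)
    from G(1) have "Nt X \<in> syms G" by (rule lhs_in_syms)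
    with less.IH \<open>nt_rank X < nt_rank Y\<close> obtain \<sigma> where "cps_sym G trig X \<sigma>" by blast
    from cps_prod_descend[OF cps_sym_cps_prod.sym_call[OF this G(1)] G(2)]
    obtain \<tau> where "cps_prod G trig (X, \<eta>, Suc i) \<tau>" by blast
    from cps_sym_cps_prod.trig_sym[OF this] True G(3) not_self show ?thesis
      by (auto simp: is_trig_def)
  qed
qed

lemma cps_prod_exists: "(X, \<eta>) \<in> G \<Longrightarrow> j \<le> length \<eta> \<Longrightarrow> \<exists>\<tau>. cps_prod G trig (X, \<eta>, j) \<tau>"
proof -
  assume "(X, \<eta>) \<in> G" "j \<le> length \<eta>"
  moreover from \<open>(X, \<eta>) \<in> G\<close> obtain \<sigma> where "cps_sym G trig X \<sigma>"
    using cps_sym_exists lhs_in_syms by blast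
  ultimately show ?thesis
    using cps_prod_descend cps_sym_cps_prod.sym_call by blast
qed

lemma tau_sym_eq: "cps_sym G trig X \<tau> \<Longrightarrow> tau_sym G trig (Nt X) = \<tau>"
  unfolding tau_sym_def by (simp, rule the_equality) (auto dest: cps_functional(1))

lemma tau_prod_eq: "cps_prod G trig \<Pi> \<tau> \<Longrightarrow> tau_prod G trig \<Pi> = \<tau>"
  unfolding tau_prod_def by (rule the_equality) (auto dest: cps_functional(2))

lemma tau_prod_length: "(X, \<eta>) \<in> G \<Longrightarrow> tau_prod G trig (X, \<eta>, length \<eta>) = tau_sym G trig (Nt X)"
proof -
  assume "(X, \<eta>) \<in> G"
  moreover from this obtain \<sigma> where "cps_sym G trig X \<sigma>"
    using cps_sym_exists lhs_in_syms by blast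
  ultimately show ?thesis
    using cps_sym_cps_prod.sym_call tau_prod_eq tau_sym_eq by metis
qed

lemma tau_prod_Suc:
  assumes "(X, \<eta>) \<in> G" and "j < length \<eta>"
  shows "tau_prod G trig (X, \<eta>, j) = cps_cont trig (\<eta> ! j) (tau_prod G trig (X, \<eta>, Suc j))"
proof -
  from assms obtain \<tau> where "cps_prod G trig (X, \<eta>, Suc j) \<tau>" using cps_prod_exists by force
  with cps_prod_step show ?thesis by (metis tau_prod_eq)
qed

lemma hat_string_tau_prod:
  "(X, \<eta>) \<in> G \<Longrightarrow> j \<le> length \<eta> \<Longrightarrow> hat_string (tau_prod G trig (X, \<eta>, j))"
  using cps_prod_exists tau_prod_eq hat_string_cps(2) by metis

lemma tau_sym_nontrig:
  assumes "s \<in> syms G" and "\<not> is_trig trig s"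
  shows "tau_sym G trig s = []"
proof (cases s)
  case (Nt Y)
  with assms have "cps_sym G trig Y []" by (auto simp: is_trig_def intro: cps_sym_cps_prod.root)
  with Nt show ?thesis by (simp add: tau_sym_eq)
qed (simp_all add: tau_sym_def)

lemma tau_sym_trig:
  assumes "(X, \<eta>) \<in> G" and "j < length \<eta>" and "is_trig trig (\<eta> ! j)"
    and not_self: "\<not> (Suc j = length \<eta> \<and> \<eta> ! j = Nt X)"
  shows "tau_sym G trig (\<eta> ! j) = tau_prod G trig (X, \<eta>, Suc j)"
proof -
  from assms obtain \<tau> where prod: "cps_prod G trig (X, \<eta>, Suc j) \<tau>" using cps_prod_exists by force
  from assms(3) obtain Y where Y: "\<eta> ! j = Nt Y" by (auto simp: is_trig_def)
  from cps_sym_cps_prod.trig_sym[OF prod] assms(3) not_self Y have "cps_sym G trig Y \<tau>" by simp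
  with prod Y show ?thesis by (simp add: tau_sym_eq tau_prod_eq)
qed

lemma CPS_derives_tau_prod_step_imp_Hgram:
  assumes sym_claim: "\<And>m Z w. m \<le> n \<Longrightarrow> derives_n (CPS G trig) m [hat Z] (map Tm w)
      \<Longrightarrow> derives_n (Hgram G trig) m (Z # tau_sym G trig Z) (map Tm w)"
    and G: "(X, \<eta>) \<in> G" and j: "j < length \<eta>" and "m \<le> n"
    and tail_claim: "\<And>m w. m \<le> n \<Longrightarrow> derives_n (CPS G trig) m (tau_prod G trig (X, \<eta>, Suc j)) (map Tm w)
      \<Longrightarrow> derives_n (Hgram G trig) m (drop (Suc j) \<eta> @ tau_sym G trig (Nt X)) (map Tm w)"
    and cps: "derives_n (CPS G trig) m (tau_prod G trig (X, \<eta>, j)) (map Tm w)"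
  shows "derives_n (Hgram G trig) m (\<eta> ! j # drop (Suc j) \<eta> @ tau_sym G trig (Nt X)) (map Tm w)"
proof -
  let ?s = "\<eta> ! j" and ?\<rho> = "tau_prod G trig (X, \<eta>, Suc j)"
  have cps: "derives_n (CPS G trig) m (cps_cont trig ?s ?\<rho>) (map Tm w)"
    using cps tau_prod_Suc[OF G j] by simp
  consider (nontrig) "\<not> is_trig trig ?s"
    | (self) "is_trig trig ?s" "Suc j = length \<eta>" "?s = Nt X"
    | (trig) "is_trig trig ?s" "\<not> (Suc j = length \<eta> \<and> ?s = Nt X)"
    by blast
  then show ?thesis
  proof cases
    case nontrig
    with cps obtain m1 m2 w1 w2 where split: "m = m1 + m2" "w = w1 @ w2"
      and head: "derives_n (CPS G trig) m1 [hat ?s] (map Tm w1)"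
      and tail: "derives_n (CPS G trig) m2 ?\<rho> (map Tm w2)"
      using derives_n_append_split_terminals[of _ _ "[hat ?s]"] by (force simp: cps_cont_def)
    have "tau_sym G trig ?s = []"
      using nontrig G nth_mem[OF j] by (intro tau_sym_nontrig rhs_in_syms)
    with sym_claim[OF _ head] tail_claim[OF _ tail] \<open>m \<le> n\<close> split
    have "derives_n (Hgram G trig) m1 [?s] (map Tm w1)"
      and "derives_n (Hgram G trig) m2 (drop (Suc j) \<eta> @ tau_sym G trig (Nt X)) (map Tm w2)"
      by simp_all
    from derives_n_append[OF this] show ?thesis using split by simp
  next
    case self
    with cps have "derives_n (CPS G trig) m [hat (Nt X)] (map Tm w)" by (simp add: cps_cont_def)
    from sym_claim[OF \<open>m \<le> n\<close> this] show ?thesis using self by simp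
  next
    case trig
    with cps have "derives_n (CPS G trig) m [hat ?s] (map Tm w)" by (simp add: cps_cont_def)
    from sym_claim[OF \<open>m \<le> n\<close> this] tau_sym_trig[OF G j trig]
    have "derives_n (Hgram G trig) m ([?s] @ ?\<rho>) (map Tm w)" by simp
    then obtain m1 m2 w1 w2 where split: "m = m1 + m2" "w = w1 @ w2"
      and head: "derives_n (Hgram G trig) m1 [?s] (map Tm w1)"
      and "derives_n (Hgram G trig) m2 ?\<rho> (map Tm w2)"
      by (blast dest: derives_n_append_split_terminals)
    then have "derives_n (CPS G trig) m2 ?\<rho> (map Tm w2)"
      using derives_Hgram_imp_CPS hat_string_tau_prod G j by (metis Suc_leI)
    with tail_claim \<open>m \<le> n\<close> split
    have "derives_n (Hgram G trig) m2 (drop (Suc j) \<eta> @ tau_sym G trig (Nt X)) (map Tm w2)"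
      by simp
    from derives_n_append[OF head this] show ?thesis using split by simp
  qed
qed

lemma CPS_derives_tau_prod_imp_Hgram_upto:
  assumes sym_claim: "\<And>m Z w. m \<le> n \<Longrightarrow> derives_n (CPS G trig) m [hat Z] (map Tm w)
      \<Longrightarrow> derives_n (Hgram G trig) m (Z # tau_sym G trig Z) (map Tm w)"
    and G: "(X, \<eta>) \<in> G" and "j \<le> length \<eta>" and "m \<le> n"
    and "derives_n (CPS G trig) m (tau_prod G trig (X, \<eta>, j)) (map Tm w)"
  shows "derives_n (Hgram G trig) m (drop j \<eta> @ tau_sym G trig (Nt X)) (map Tm w)"
  using assms(3-)
proof (induction "length \<eta> - j" arbitrary: j m w)
  case 0
  then have "j = length \<eta>" by simp
  with 0 G show ?case by (simp add: tau_prod_length derives_n_mono[OF CPS_subset_Hgram])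
next
  case (Suc d)
  then have j: "j < length \<eta>" by simp
  from Suc.hyps j have "derives_n (Hgram G trig) m' (drop (Suc j) \<eta> @ tau_sym G trig (Nt X)) (map Tm w')"
    if "m' \<le> n" "derives_n (CPS G trig) m' (tau_prod G trig (X, \<eta>, Suc j)) (map Tm w')" for m' w'
    using that by simp
  moreover have "drop j \<eta> = \<eta> ! j # drop (Suc j) \<eta>" using j by (simp add: Cons_nth_drop_Suc)
  ultimately show ?case
    using CPS_derives_tau_prod_step_imp_Hgram[OF sym_claim G j \<open>m \<le> n\<close> _ Suc.prems(3)] by simp
qed

lemma CPS_derives_hat_imp_Hgram:
  "derives_n (CPS G trig) n [hat Z] (map Tm w) \<Longrightarrow>
   derives_n (Hgram G trig) n (Z # tau_sym G trig Z) (map Tm w)"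
proof (induction n arbitrary: Z w rule: less_induct)
  case (less n)
  show ?case
  proof (cases Z)
    case (Nt Y)
    have derivation: "derives_n (CPS G trig) n [Hat Y] (map Tm w)" using less.prems Nt by simp
    then obtain m where n: "n = Suc m" by (cases n) auto
    from relpowp_Suc_D2[OF derivation[unfolded n]] obtain \<tau>
      where "derive1 (CPS G trig) [Hat Y] \<tau>" and rest: "derives_n (CPS G trig) m \<tau> (map Tm w)"
      by blast
    then obtain \<eta> where prod: "cps_prod G trig (Y, \<eta>, 0) \<tau>"
      by (auto simp: CPS_def dest: derive1_singleton)
    note G = cps_prod_in_G(1)[OF prod]
    have "derives_n (Hgram G trig) m (\<eta> @ tau_sym G trig (Nt Y)) (map Tm w)"
      using CPS_derives_tau_prod_imp_Hgram_upto[of m, OF less.IH G, of 0] rest n tau_prod_eq[OF prod]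
      by simp
    moreover have "derive1 (Hgram G trig) (Nt Y # tau_sym G trig (Nt Y)) (\<eta> @ tau_sym G trig (Nt Y))"
      using G by (intro derive1_Cons) (auto simp: Hgram_def lift_def)
    ultimately show ?thesis using Nt n by (blast intro: relpowp_Suc_I2)
  qed (use less.prems derives_n_mono[OF CPS_subset_Hgram] in \<open>simp_all add: tau_sym_def\<close>)
qed

lemma CPS_derives_tau_prod_imp_Hgram:
  "(X, \<eta>) \<in> G \<Longrightarrow> j \<le> length \<eta> \<Longrightarrow>
   derives_n (CPS G trig) n (tau_prod G trig (X, \<eta>, j)) (map Tm w) \<Longrightarrow>
   derives_n (Hgram G trig) n (drop j \<eta> @ tau_sym G trig (Nt X)) (map Tm w)"
  using CPS_derives_tau_prod_imp_Hgram_upto[OF CPS_derives_hat_imp_Hgram] by blast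

end

section \<open>Occurrences of fresh nonterminals after flattening\<close>

lemma distinct_filter_nth_eq:
  "distinct (filter P xs) \<Longrightarrow> i < length xs \<Longrightarrow> i' < length xs \<Longrightarrow> xs ! i = xs ! i'
    \<Longrightarrow> P (xs ! i) \<Longrightarrow> i = i'"
proof (induction xs arbitrary: i i')
  case (Cons x xs)
  then show ?case by (cases i; cases i') (auto simp: nth_mem split: if_split_asm)
qed simp

lemma occurrences_Un: "occurrences (P \<union> Q) Y = occurrences P Y \<union> occurrences Q Y"
  by (auto simp: occurrences_def)

lemma syms_Un: "syms (P \<union> Q) = syms P \<union> syms Q"
  by (auto simp: syms_def)

lemma syms_singleton: "syms {(X, \<beta>)} = insert (Nt X) (set \<beta>)"
  by (auto simp: syms_def)

definition occurrences_within :: "('t,'n) prod set \<Rightarrow> nat \<Rightarrow> nat \<Rightarrow> bool" where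
  "occurrences_within P k k' \<longleftrightarrow>
     (\<forall>j p. p \<in> occurrences P (Fresh j) \<longrightarrow> k \<le> j \<and> j < k' \<and> nt_rank (fst p) \<le> j)"

definition fresh_occur_once :: "('t,'n) prod set \<Rightarrow> bool" where
  "fresh_occur_once P \<longleftrightarrow>
     (\<forall>j p q. p \<in> occurrences P (Fresh j) \<longrightarrow> q \<in> occurrences P (Fresh j) \<longrightarrow> p = q)"

definition fresh_occurring :: "('t,'n) sym set \<Rightarrow> ('t,'n) prod set \<Rightarrow> bool" where
  "fresh_occurring A P \<longleftrightarrow>
     (\<forall>j. Nt (Fresh j) \<in> syms P \<longrightarrow> Nt (Fresh j) \<in> A \<or> occurrences P (Fresh j) \<noteq> {})"

text \<open>Invariant of a run of Flatten that moves the counter from k to k': only fresh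
  nonterminals created in the run have occurrences in P, at most one each and in a production
  of an earlier nonterminal, and every fresh symbol of P has one unless it lies in A (the
  nonterminal being defined, or the fresh symbols of a pending concatenation).\<close>
definition flat_inv :: "('t,'n) sym set \<Rightarrow> nat \<Rightarrow> nat \<Rightarrow> ('t,'n) prod set \<Rightarrow> bool" where
  "flat_inv A k k' P \<longleftrightarrow>
     k \<le> k' \<and> occurrences_within P k k' \<and> fresh_occur_once P \<and> fresh_occurring A P"

lemma flat_inv_empty: "flat_inv A k k {}"
  by (simp add: flat_inv_def occurrences_within_def fresh_occur_once_def fresh_occurring_def
      occurrences_def syms_def)

lemma flat_inv_widen: "flat_inv A k1 k2 P \<Longrightarrow> k0 \<le> k1 \<Longrightarrow> k2 \<le> k3 \<Longrightarrow> flat_inv A k0 k3 P"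
  unfolding flat_inv_def occurrences_within_def by fastforce

lemma flat_inv_discharge:
  "flat_inv A k k' P \<Longrightarrow> (\<And>j. Nt (Fresh j) \<in> A \<Longrightarrow> Nt (Fresh j) \<in> B \<or> occurrences P (Fresh j) \<noteq> {})
    \<Longrightarrow> flat_inv B k k' P"
  unfolding flat_inv_def fresh_occurring_def by blast

lemma flat_inv_Un:
  assumes P: "flat_inv A k k' P" and Q: "flat_inv B k k' Q"
    and disjoint: "\<And>j. occurrences P (Fresh j) = {} \<or> occurrences Q (Fresh j) = {}"
  shows "flat_inv (A \<union> B) k k' (P \<union> Q)"
proof -
  have "fresh_occur_once (P \<union> Q)"
    unfolding fresh_occur_once_def occurrences_Un
  proof (intro allI impI)
    fix j p q
    assume "p \<in> occurrences P (Fresh j) \<union> occurrences Q (Fresh j)"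
      and "q \<in> occurrences P (Fresh j) \<union> occurrences Q (Fresh j)"
    with disjoint[of j] P Q show "p = q"
      unfolding flat_inv_def fresh_occur_once_def by (metis Un_empty_left Un_empty_right)
  qed
  with P Q show ?thesis
    unfolding flat_inv_def occurrences_within_def fresh_occurring_def occurrences_Un syms_Un
    by blast
qed

lemma flat_inv_append:
  assumes "flat_inv A k k1 P" and "flat_inv B k1 k2 Q"
  shows "flat_inv (A \<union> B) k k2 (P \<union> Q)"
proof -
  from assms have ranges: "k \<le> k1" "k1 \<le> k2" by (simp_all add: flat_inv_def)
  have "occurrences P (Fresh j) = {} \<or> occurrences Q (Fresh j) = {}" for j
  proof (rule ccontr)
    assume "\<not> ?thesis"
    then obtain p q where "p \<in> occurrences P (Fresh j)" "q \<in> occurrences Q (Fresh j)" by blast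
    with assms have "j < k1" "k1 \<le> j" unfolding flat_inv_def occurrences_within_def by blast+
    then show False by simp
  qed
  with flat_inv_widen[OF assms(1) order_refl ranges(2)] flat_inv_widen[OF assms(2) ranges(1) order_refl]
  show ?thesis by (rule flat_inv_Un)
qed

lemma flat_inv_no_fresh:
  assumes "Nt X \<in> A" and "\<And>j. Nt (Fresh j) \<notin> set \<beta>"
  shows "flat_inv A k k {(X, \<beta>)}"
proof -
  have "occurrences {(X, \<beta>)} (Fresh j) = {}" for j
    using assms(2) by (auto simp: occurrences_def dest: nth_mem)
  with assms(1) show ?thesis
    by (simp add: flat_inv_def occurrences_within_def fresh_occur_once_def fresh_occurring_def
        syms_singleton assms(2))
qed

lemma flat_inv_star_prod:
  assumes "nt_rank X \<le> k"
  shows "flat_inv {Nt X} k (Suc k) {(X, [Nt (Fresh k), Nt X])}"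
proof -
  have occ: "occurrences {(X, [Nt (Fresh k), Nt X])} (Fresh j)
      = (if j = k then {(X, [Nt (Fresh k), Nt X], 0)} else {})" for j
    by (auto simp: occurrences_def less_Suc_eq nth_Cons split: nat.splits)
  show ?thesis
    using assms unfolding flat_inv_def occurrences_within_def fresh_occur_once_def
      fresh_occurring_def occ
    by (simp add: syms_singleton)
qed

lemma flat_inv_prod:
  assumes "nt_rank X \<le> k" and "k \<le> k'"
    and distinct: "distinct (filter (\<lambda>s. \<exists>j. s = Nt (Fresh j)) \<beta>)"
    and new: "\<And>j. Nt (Fresh j) \<in> set \<beta> \<Longrightarrow> k \<le> j \<and> j < k'"
  shows "flat_inv {Nt X} k k' {(X, \<beta>)}"
proof -
  have occ: "p \<in> occurrences {(X, \<beta>)} Y \<longleftrightarrow> (\<exists>i. p = (X, \<beta>, i) \<and> i < length \<beta> \<and> \<beta> ! i = Nt Y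
      \<and> \<not> (Suc i = length \<beta> \<and> X = Y))" for p Y
    by (auto simp: occurrences_def)
  have "occurrences_within {(X, \<beta>)} k k'"
    unfolding occurrences_within_def occ using assms(1) new by (fastforce dest: nth_mem)
  moreover have "fresh_occur_once {(X, \<beta>)}"
    unfolding fresh_occur_once_def occ using distinct_filter_nth_eq[OF distinct] by fastforce
  moreover have "fresh_occurring {Nt X} {(X, \<beta>)}"
    unfolding fresh_occurring_def syms_singleton
  proof (intro allI impI)
    fix j assume "Nt (Fresh j) \<in> insert (Nt X) (set \<beta>)"
    then consider "X = Fresh j" | i where "i < length \<beta>" "\<beta> ! i = Nt (Fresh j)" "X \<noteq> Fresh j"
      by (auto simp: in_set_conv_nth)
    then show "Nt (Fresh j) \<in> {Nt X} \<or> occurrences {(X, \<beta>)} (Fresh j) \<noteq> {}"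
      by cases (auto simp: occurrences_def)
  qed
  ultimately show ?thesis using \<open>k \<le> k'\<close> by (simp add: flat_inv_def)
qed

definition flat_conc_inv :: "nat \<Rightarrow> nat \<Rightarrow> ('t,'n) sym list \<Rightarrow> ('t,'n) prod set \<Rightarrow> bool" where
  "flat_conc_inv k k' \<beta> P \<longleftrightarrow> flat_inv (set \<beta>) k k' P
     \<and> distinct (filter (\<lambda>s. \<exists>j. s = Nt (Fresh j)) \<beta>)
     \<and> (\<forall>j. Nt (Fresh j) \<in> set \<beta> \<longrightarrow> k \<le> j \<and> j < k' \<and> occurrences P (Fresh j) = {})"

lemma flat_conc_inv_Nil: "flat_conc_inv k k [] {}"
  by (simp add: flat_conc_inv_def flat_inv_empty)

lemma flat_conc_inv_Cons_nonfresh: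
  "(\<And>j. s \<noteq> Nt (Fresh j)) \<Longrightarrow> flat_conc_inv k k' \<beta> P \<Longrightarrow> flat_conc_inv k k' (s # \<beta>) P"
  unfolding flat_conc_inv_def by (auto intro: flat_inv_discharge)

lemma flat_conc_inv_Cons_fresh:
  assumes P: "flat_inv {Nt (Fresh k)} (Suc k) k1 P" and Q: "flat_conc_inv k1 k2 \<beta> Q"
  shows "flat_conc_inv k k2 (Nt (Fresh k) # \<beta>) (P \<union> Q)"
proof -
  from P Q have ranges: "Suc k \<le> k1" "k1 \<le> k2" by (simp_all add: flat_inv_def flat_conc_inv_def)
  have "flat_inv (set (Nt (Fresh k) # \<beta>)) k k2 (P \<union> Q)"
    using flat_inv_append[OF flat_inv_widen[OF P _ order_refl] conjunct1[OF Q[unfolded flat_conc_inv_def]]]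
    by simp
  moreover have "occurrences P (Fresh j) = {}" if "j < Suc k \<or> k1 \<le> j" for j
    using P that unfolding flat_inv_def occurrences_within_def by fastforce
  moreover have "occurrences Q (Fresh j) = {}" if "j < k1" for j
    using Q that unfolding flat_conc_inv_def flat_inv_def occurrences_within_def by fastforce
  ultimately show ?thesis
    using Q ranges unfolding flat_conc_inv_def occurrences_Un by fastforce
qed

lemma flat_inv_conc_prod:
  assumes "nt_rank X \<le> k" and conc: "flat_conc_inv k k' \<beta> P"
  shows "flat_inv {Nt X} k k' (insert (X, \<beta>) P)"
proof -
  from conc have "k \<le> k'" by (simp add: flat_conc_inv_def flat_inv_def)
  with assms have prod: "flat_inv {Nt X} k k' {(X, \<beta>)}"
    by (intro flat_inv_prod) (auto simp: flat_conc_inv_def)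
  have in_rhs: "Nt (Fresh j) \<in> set \<beta>" if "occurrences {(X, \<beta>)} (Fresh j) \<noteq> {}" for j
    using that by (force simp: occurrences_def in_set_conv_nth)
  have "flat_inv (set \<beta> \<union> {Nt X}) k k' (P \<union> {(X, \<beta>)})"
    using conc in_rhs by (intro flat_inv_Un[OF _ prod]) (auto simp: flat_conc_inv_def)
  then have "flat_inv {Nt X} k k' (P \<union> {(X, \<beta>)})"
  proof (rule flat_inv_discharge)
    fix j assume "Nt (Fresh j) \<in> set \<beta> \<union> {Nt X}"
    then show "Nt (Fresh j) \<in> {Nt X} \<or> occurrences (P \<union> {(X, \<beta>)}) (Fresh j) \<noteq> {}"
      by (auto simp: occurrences_def in_set_conv_nth)
  qed
  then show ?thesis by simp
qed

lemma flat_inv_opt: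
  assumes "flat_inv {Nt X} k k' P"
  shows "flat_inv {Nt X} k k' (insert (X, []) P)"
  using flat_inv_append[OF assms flat_inv_no_fresh[of X "{Nt X}" "[]" k']] by simp

lemma flat_inv_star:
  assumes "nt_rank X \<le> k" and body: "flat_inv {Nt (Fresh k)} (Suc k) k' P"
  shows "flat_inv {Nt X} k k' (insert (X, [Nt (Fresh k), Nt X]) (insert (X, []) P))"
proof -
  let ?star = "(X, [Nt (Fresh k), Nt X])"
  have star_body: "flat_inv ({Nt X} \<union> {Nt (Fresh k)}) k k' ({?star} \<union> P)"
    by (rule flat_inv_append[OF flat_inv_star_prod[OF assms(1)] body])
  have occ: "(X, [Nt (Fresh k), Nt X], 0) \<in> occurrences ({?star} \<union> P) (Fresh k)"
    by (simp add: occurrences_def)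
  have "flat_inv {Nt X} k k' ({?star} \<union> P)"
  proof (rule flat_inv_discharge[OF star_body])
    fix j assume "Nt (Fresh j) \<in> {Nt X} \<union> {Nt (Fresh k)}"
    with occ show "Nt (Fresh j) \<in> {Nt X} \<or> occurrences ({?star} \<union> P) (Fresh j) \<noteq> {}" by auto
  qed
  from flat_inv_opt[OF this] show ?thesis by (simp add: insert_commute)
qed

lemma single_sym_not_fresh: "single_sym e = Some s \<Longrightarrow> s \<noteq> Nt (Fresh j)"
  by (cases e) auto

lemma flat_invariants:
  shows "nt_rank X \<le> k \<Longrightarrow> flat X e k = (ps, k') \<Longrightarrow> flat_inv {Nt X} k k' (set ps)"
    and "flat_conc es k = (\<beta>, ps, k') \<Longrightarrow> flat_conc_inv k k' \<beta> (set ps)"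
    and "nt_rank X \<le> k \<Longrightarrow> flat_alt X es' k = (ps, k') \<Longrightarrow> flat_inv {Nt X} k k' (set ps)"
proof (induction X e k and es k and X es' k arbitrary: ps k' and \<beta> ps k' and ps k'
    rule: flat_flat_conc_flat_alt.induct)
  case (1 X a k)
  then show ?case by (auto intro!: flat_inv_no_fresh)
next
  case (2 X A k)
  then show ?case by (auto intro!: flat_inv_no_fresh)
next
  case (3 X es k)
  then show ?case by (auto split: prod.splits intro: flat_inv_conc_prod)
next
  case (4 X es k)
  then show ?case by simp
next
  case (5 X e k)
  then show ?case by (auto split: prod.splits intro: flat_inv_opt)
next
  case (6 X e k)
  obtain ps0 k0 where body: "flat (Fresh k) e (Suc k) = (ps0, k0)" by fastforce
  with 6 have "flat_inv {Nt (Fresh k)} (Suc k) k0 (set ps0)" by simp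
  with 6 body show ?case by (auto intro: flat_inv_star)
next
  case (7 k)
  then show ?case using flat_conc_inv_Nil by auto
next
  case (8 e es k)
  show ?case
  proof (cases "single_sym e")
    case (Some s)
    obtain \<beta>' ps' k'' where es: "flat_conc es k = (\<beta>', ps', k'')" by (metis prod_cases3)
    with 8 Some have "flat_conc_inv k k'' \<beta>' (set ps')" by simp
    with 8 Some es show ?thesis
      by (auto intro: flat_conc_inv_Cons_nonfresh dest: single_sym_not_fresh)
  next
    case None
    obtain ps1 k1 where e: "flat (Fresh k) e (Suc k) = (ps1, k1)" by fastforce
    obtain \<beta>' ps2 k2 where es: "flat_conc es k1 = (\<beta>', ps2, k2)" by (metis prod_cases3)
    from 8 None e have inv1: "flat_inv {Nt (Fresh k)} (Suc k) k1 (set ps1)" by simp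
    from 8 None e es have inv2: "flat_conc_inv k1 k2 \<beta>' (set ps2)" by simp
    from 8(4) None e es have "\<beta> = Nt (Fresh k) # \<beta>'" "ps = ps1 @ ps2" "k' = k2" by simp_all
    with flat_conc_inv_Cons_fresh[OF inv1 inv2] show ?thesis by simp
  qed
next
  case (9 X k)
  then show ?case using flat_inv_empty by auto
next
  case (10 X e es k)
  obtain ps1 k1 where e: "flat X e k = (ps1, k1)" by fastforce
  obtain ps2 k2 where es: "flat_alt X es k1 = (ps2, k2)" by fastforce
  from 10 e have inv1: "flat_inv {Nt X} k k1 (set ps1)" by simp
  then have "nt_rank X \<le> k1" using \<open>nt_rank X \<le> k\<close> by (simp add: flat_inv_def)
  with 10 e es have "flat_inv {Nt X} k1 k2 (set ps2)" by simp
  from flat_inv_append[OF inv1 this] 10 e es show ?case by auto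
qed

lemma flat_rules_inv: "flat_rules rs k = (ps, k') \<Longrightarrow> flat_inv {} k k' (set ps)"
proof (induction rs k arbitrary: ps k' rule: flat_rules.induct)
  case (1 k)
  then show ?case using flat_inv_empty by simp
next
  case (2 A e rs k)
  obtain ps1 k1 where e: "flat (Top A) e k = (ps1, k1)" by fastforce
  obtain ps2 k2 where rs: "flat_rules rs k1 = (ps2, k2)" by fastforce
  from flat_invariants(1)[OF _ e] have inv1: "flat_inv {Nt (Top A)} k k1 (set ps1)" by simp
  from 2 e rs have inv2: "flat_inv {} k1 k2 (set ps2)" by simp
  from flat_inv_append[OF inv1 inv2] have "flat_inv {Nt (Top A)} k k2 (set ps1 \<union> set ps2)"
    by simp
  then have "flat_inv {} k k2 (set ps1 \<union> set ps2)" by (rule flat_inv_discharge) simp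
  moreover from 2(2) e rs have "ps = ps1 @ ps2" "k' = k2" by simp_all
  ultimately show ?case by simp
qed

lemma flat_grammar_cps_occurrences:
  assumes "trig \<subseteq> cps_eligible (flat_grammar rs)"
  shows "cps_occurrences (flat_grammar rs) trig"
proof -
  let ?G = "flat_grammar rs"
  obtain ps k' where "flat_rules rs 0 = (ps, k')" by fastforce
  then have inv: "flat_inv {} 0 k' ?G" by (simp add: flat_grammar_def flat_rules_inv)
  have trig_fresh: "\<exists>j. Y = Fresh j \<and> Nt (Fresh j) \<in> syms ?G" if "Y \<in> trig" for Y
    using that assms by (auto simp: cps_eligible_def)
  show ?thesis
  proof unfold_locales
    fix Y p q assume "Y \<in> trig" "p \<in> occurrences ?G Y" "q \<in> occurrences ?G Y"
    with trig_fresh inv show "p = q" unfolding flat_inv_def fresh_occur_once_def by blast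
  next
    fix Y assume "Y \<in> trig"
    with trig_fresh obtain j where Y: "Y = Fresh j" "Nt (Fresh j) \<in> syms ?G" by blast
    with inv obtain p where "p \<in> occurrences ?G Y"
      unfolding flat_inv_def fresh_occurring_def by blast
    moreover from this inv Y have "nt_rank (fst p) < nt_rank Y"
      unfolding flat_inv_def occurrences_within_def by fastforce
    ultimately show "\<exists>p \<in> occurrences ?G Y. nt_rank (fst p) < nt_rank Y" by blast
  qed
qed

theorem mainTheorem2:
  fixes rs :: "('n \<times> ('t,'n) bexp) list"
    and G :: "('t,'n) prod set"
    and trig :: "'n nt set"
    and w :: "'t list"
  assumes G_def: "G = flat_grammar rs"
    and trig_sub: "trig \<subseteq> cps_eligible G"
  shows "(\<forall>X n. X \<in> syms G \<longrightarrow> derives_n (CPS G trig) n [hat X] (map Tm w)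
             \<longrightarrow> derives_n (Hgram G trig) n (X # tau_sym G trig X) (map Tm w))
       \<and> (\<forall>X \<eta> j n. (X, \<eta>) \<in> G \<longrightarrow> j \<le> length \<eta> \<longrightarrow>
             derives_n (CPS G trig) n (tau_prod G trig (X, \<eta>, j)) (map Tm w)
             \<longrightarrow> derives_n (Hgram G trig) n (drop j \<eta> @ tau_sym G trig (Nt X)) (map Tm w))"
proof -
  interpret cps_occurrences G trig
    using flat_grammar_cps_occurrences trig_sub unfolding G_def by blast
  show ?thesis using CPS_derives_hat_imp_Hgram CPS_derives_tau_prod_imp_Hgram by blast
qed

end
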